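(* Let $R$ be a partially ordered commutative ring with $\mathbb{N}\subseteq\mathrm{Loc}(R)$, let $\varphi\in\mathcal{K}(R)$ and let $U$ be a neighbourhood of $\varphi$ in $\mathcal{K}(R)$. Then there exists $b\in R^{\mathrm{bd}}_{\mathrm{loc}}$ such that $\varphi\in\mathrm{O}_{b,]-\infty,0[}\subseteq U$, where $\mathrm{O}_{b,]-\infty,0[}=\{\psi\in\mathcal{K}(R):\psi(b)<0\}$.
   Context: Rings are commutative with unit; ring morphisms are unital. A partially ordered commutative ring is a commutative ring $R$ with partial order $\le$, $r\le s\Rightarrow r+t\le s+t$, positive cone $R^+$ closed under multiplication and containing all squares. $\mathbb{N}=\{1,2,\dots\}$, $\mathbb{N}_0=\mathbb{N}\cup\{0\}$. $\mathrm{Loc}(R)$ is the set of $s\in1+R^+$ such that $rs\in R^+$ implies $r\in R^+$ for all $r\in R$; $\mathbb{N}\subseteq\mathrm{Loc}(R)$ means $n\cdot1\in\mathrm{Loc}(R)$ for all $n$. $R_{\mathrm{loc}}$: fractions $r/s$ ($r\in R$, $s\in\mathrm{Loc}(R)$), $r/s=r'/s'$ iff $rs'=r's$, usual operations, ordered by $p/q\le r/s$ iff $ps\le rq$. $R^{\mathrm{bd}}_{\mathrm{loc}}=\{a\in R_{\mathrm{loc}}:\exists n\in\mathbb{N}_0,\ -n\le a\le n\}$, a subring. $\mathcal{K}(R)$ is the set of ring morphisms $\varphi\colon R^{\mathrm{bd}}_{\mathrm{loc}}\to\mathbb{R}$ with $\varphi(a)\ge0$ for all $a\ge 0$, with the topology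 generated by the subbasis of sets $\{\varphi:\varphi(a)\in V\}$, $a\in R^{\mathrm{bd}}_{\mathrm{loc}}$, $V\subseteq\mathbb{R}$ open. *)

theory Defs
  imports "HOL-Analysis.Analysis"
begin

class po_comm_ring = comm_ring_1 + order +
  assumes po_add_right_mono: "a \<le> b \<Longrightarrow> a + c \<le> b + c"
  assumes po_mult_nonneg: "0 \<le> a \<Longrightarrow> 0 \<le> b \<Longrightarrow> 0 \<le> a * b"
  assumes po_square_nonneg: "0 \<le> a * a"

definition pos_cone :: "'a::po_comm_ring set" where
  "pos_cone = {r. 0 \<le> r}"

definition Loc :: "'a::po_comm_ring set" where
  "Loc = {s. s - 1 \<in> pos_cone \<and> (\<forall>r. r * s \<in> pos_cone \<longrightarrow> r \<in> pos_cone)}"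

lemma Loc_one: "(1::'a::po_comm_ring) \<in> Loc"
  by (simp add: Loc_def pos_cone_def)

lemma Loc_nonneg:
  assumes "s \<in> Loc" shows "0 \<le> (s::'a::po_comm_ring)"
proof -
  have "0 \<le> s - 1" using assms by (simp add: Loc_def pos_cone_def)
  hence "0 + 1 \<le> s - 1 + 1" by (rule po_add_right_mono)
  moreover have "0 \<le> (1::'a)" using po_square_nonneg[of 1] by simp
  ultimately show ?thesis by simp
qed

lemma Loc_cancel:
  assumes "s \<in> Loc" "t * s = (0::'a::po_comm_ring)" shows "t = 0"
proof -
  have a: "0 \<le> t" using assms by (auto simp: Loc_def pos_cone_def)
  have "(- t) * s = 0" using assms by simp
  hence "0 \<le> - t" using assms by (auto simp: Loc_def pos_cone_def)
  hence "0 + t \<le> - t + t" by (rule po_add_right_mono)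
  hence "t \<le> 0" by simp
  with a show ?thesis by simp
qed

lemma Loc_mult:
  assumes "s \<in> Loc" "s' \<in> Loc" shows "s * s' \<in> (Loc::'a::po_comm_ring set)"
proof -
  have a: "0 \<le> s - 1" "0 \<le> s' - 1" using assms by (auto simp: Loc_def pos_cone_def)
  have "0 \<le> (s - 1) * (s' - 1)" using a po_mult_nonneg by blast
  hence "0 + (s - 1) \<le> (s - 1) * (s' - 1) + (s - 1)" by (rule po_add_right_mono)
  hence b: "0 \<le> (s - 1) * (s' - 1) + (s - 1)" using a order_trans by fastforce
  hence "0 + (s' - 1) \<le> (s - 1) * (s' - 1) + (s - 1) + (s' - 1)" by (rule po_add_right_mono)
  hence "0 \<le> (s - 1) * (s' - 1) + (s - 1) + (s' - 1)" using a order_trans by fastforce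
  moreover have "(s - 1) * (s' - 1) + (s - 1) + (s' - 1) = s * s' - 1" by (simp add: algebra_simps)
  ultimately have c: "0 \<le> s * s' - 1" by simp
  have "\<forall>r. 0 \<le> r * (s * s') \<longrightarrow> 0 \<le> r"
  proof (intro allI impI)
    fix r assume "0 \<le> r * (s * s')"
    hence "0 \<le> (r * s) * s'" by (simp add: mult.assoc)
    hence "0 \<le> r * s" using assms(2) by (auto simp: Loc_def pos_cone_def)
    thus "0 \<le> r" using assms(1) by (auto simp: Loc_def pos_cone_def)
  qed
  with c show ?thesis by (simp add: Loc_def pos_cone_def)
qed

definition frac_rel :: "'a::po_comm_ring \<times> 'a \<Rightarrow> 'a \<times> 'a \<Rightarrow> bool" where
  "frac_rel = (\<lambda>(r, s) (r', s'). s \<in> Loc \<and> s' \<in> Loc \<and> r * s' = r' * s)"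

lemma frac_rel_part_equivp: "part_equivp frac_rel"
proof (rule part_equivpI)
  show "\<exists>x. frac_rel x x" by (rule exI[of _ "(0, 1)"]) (simp add: frac_rel_def Loc_one)
  show "symp frac_rel" by (auto simp: symp_def frac_rel_def)
  show "transp frac_rel"
  proof (rule transpI)
    fix x y z assume "frac_rel x y" "frac_rel y z"
    then obtain r s r' s' r'' s'' where xyz: "x = (r, s)" "y = (r', s')" "z = (r'', s'')"
      and h: "s \<in> Loc" "s' \<in> Loc" "s'' \<in> Loc" "r * s' = r' * s" "r' * s'' = r'' * s'"
      by (cases x; cases y; cases z) (auto simp: frac_rel_def)
    have "(r * s'' - r'' * s) * s' = (r * s') * s'' - (r'' * s') * s" by (simp add: algebra_simps)
    also have "\<dots> = (r' * s'') * s - (r'' * s') * s" using h(4) by (simp add: algebra_simps)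
    also have "\<dots> = 0" using h(5) by simp
    finally have "r * s'' - r'' * s = 0" using Loc_cancel h(2) by blast
    thus "frac_rel x z" using xyz h by (simp add: frac_rel_def)
  qed
qed

quotient_type (overloaded) 'a rloc = "'a::po_comm_ring \<times> 'a" / partial: frac_rel
  by (rule frac_rel_part_equivp)

lift_definition rl_of :: "'a::po_comm_ring \<Rightarrow> 'a rloc" is "\<lambda>r. (r, 1)"
  by (simp add: frac_rel_def Loc_one)

lift_definition rl_add :: "'a::po_comm_ring rloc \<Rightarrow> 'a rloc \<Rightarrow> 'a rloc"
  is "\<lambda>(r, s) (r', s'). (r * s' + r' * s, s * s')"
  by (auto simp: frac_rel_def Loc_mult algebra_simps)
    (metis (no_types, lifting) mult.assoc mult.left_commute)

lift_definition rl_mult :: "'a::po_comm_ring rloc \<Rightarrow> 'a rloc \<Rightarrow> 'a rloc"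
  is "\<lambda>(r, s) (r', s'). (r * r', s * s')"
  by (auto simp: frac_rel_def Loc_mult algebra_simps)
    (metis (no_types, lifting) mult.assoc mult.left_commute)

lemma po_le_iff_nonneg: "(a::'a::po_comm_ring) \<le> b \<longleftrightarrow> 0 \<le> b - a"
proof
  assume "a \<le> b" hence "a + - a \<le> b + - a" by (rule po_add_right_mono) thus "0 \<le> b - a" by simp
next
  assume "0 \<le> b - a" hence "0 + a \<le> b - a + a" by (rule po_add_right_mono) thus "a \<le> b" by simp
qed

lemma Loc_nonneg_iff:
  assumes "t \<in> Loc" shows "0 \<le> x * t \<longleftrightarrow> 0 \<le> (x::'a::po_comm_ring)"
  using assms Loc_nonneg po_mult_nonneg by (auto simp: Loc_def pos_cone_def)

lemma rl_le_respects:
  assumes "frac_rel (p, q) (p', q')" "frac_rel (r, s) (r', s')"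
  shows "(p * s \<le> r * q) = (p' * s' \<le> r' * q')"
proof -
  have h: "q \<in> Loc" "q' \<in> Loc" "s \<in> Loc" "s' \<in> Loc" "p * q' = p' * q" "r * s' = r' * s"
    using assms by (auto simp: frac_rel_def)
  have e: "(r * q - p * s) * (q' * s') = (r' * q' - p' * s') * (q * s)"
  proof -
    have "(r * q - p * s) * (q' * s') = (r * s') * q * q' - (p * q') * s * s'" by (simp add: algebra_simps)
    also have "\<dots> = (r' * s) * q * q' - (p' * q) * s * s'" using h by simp
    also have "\<dots> = (r' * q' - p' * s') * (q * s)" by (simp add: algebra_simps)
    finally show ?thesis .
  qed
  have "(p * s \<le> r * q) = (0 \<le> (r * q - p * s) * (q' * s'))"
    using Loc_nonneg_iff[OF Loc_mult[OF h(2,4)]] po_le_iff_nonneg by blast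
  also have "\<dots> = (0 \<le> (r' * q' - p' * s') * (q * s))" using e by simp
  also have "\<dots> = (p' * s' \<le> r' * q')"
    using Loc_nonneg_iff[OF Loc_mult[OF h(1,3)]] po_le_iff_nonneg by blast
  finally show ?thesis .
qed

lift_definition rl_le :: "'a::po_comm_ring rloc \<Rightarrow> 'a rloc \<Rightarrow> bool"
  is "\<lambda>(p, q) (r, s). p * s \<le> r * q"
  using rl_le_respects by fastforce

definition Rbd :: "'a::po_comm_ring rloc set" where
  "Rbd = {a. \<exists>n::nat. rl_le (rl_of (- of_nat n)) a \<and> rl_le a (rl_of (of_nat n))}"

text \<open>K(R): positive unital ring morphisms R^bd_loc \<rightarrow> \<real>. Functions are represented as
  total functions on R_loc that vanish outside R^bd_loc (extensional convention).\<close>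
definition KR :: "('a::po_comm_ring rloc \<Rightarrow> real) set" where
  "KR = {\<phi>. (\<forall>a\<in>Rbd. \<forall>b\<in>Rbd. \<phi> (rl_add a b) = \<phi> a + \<phi> b)
            \<and> (\<forall>a\<in>Rbd. \<forall>b\<in>Rbd. \<phi> (rl_mult a b) = \<phi> a * \<phi> b)
            \<and> \<phi> (rl_of 1) = 1
            \<and> (\<forall>a\<in>Rbd. rl_le (rl_of 0) a \<longrightarrow> 0 \<le> \<phi> a)
            \<and> (\<forall>a. a \<notin> Rbd \<longrightarrow> \<phi> a = 0)}"

definition KR_topology :: "('a::po_comm_ring rloc \<Rightarrow> real) topology" where
  "KR_topology = topology_generated_by
     {{\<phi> \<in> KR. \<phi> a \<in> V} | a V. a \<in> Rbd \<and> open V}"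

definition O_neg :: "'a::po_comm_ring rloc \<Rightarrow> ('a rloc \<Rightarrow> real) set" where
  "O_neg b = {\<psi> \<in> KR. \<psi> b < 0}"

end

theory Submission
  imports Defs
begin

(* Basic neighbourhoods of \<phi> are cut out by a finite set A of bounded elements, k = card A,
  and an \<epsilon> > 0.  Choose n with n\<epsilon> > k + 2, let p(a) be the integer nearest to n \<phi>(a), and
  put b = \<Sum>a\<in>A (n a - p(a))^2 - (k + 1)^2.  For every \<psi> \<in> K(R),
  \<psi>(b) = \<Sum>a\<in>A (n \<psi>(a) - p(a))^2 - (k + 1)^2.  At \<psi> = \<phi> each square is at most 1/4, so
  \<phi>(b) < 0; conversely \<psi>(b) < 0 forces |n \<psi>(a) - p(a)| < k + 1 for each a, hence
  n |\<psi>(a) - \<phi>(a)| < k + 2 < n\<epsilon>.  Scaling by n instead of dividing by n means that n is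
  never inverted. *)

instance po_comm_ring \<subseteq> ordered_comm_ring
proof
  fix a b c :: "'a::po_comm_ring"
  assume "a \<le> b"
  then show "c + a \<le> c + b"
    using po_add_right_mono[of a b c] by (simp add: add.commute)
next
  fix a b c :: "'a::po_comm_ring"
  assume "a \<le> b" "0 \<le> c"
  then have "0 \<le> c * (b - a)"
    by (simp add: po_mult_nonneg po_le_iff_nonneg[of a b, symmetric])
  then show "c * a \<le> c * b"
    by (simp add: po_le_iff_nonneg[of "c * a"] right_diff_distrib)
qed

lemma po_zero_le_one: "(0::'a::po_comm_ring) \<le> 1"
  using po_square_nonneg[of "1::'a"] by simp

lemma po_of_nat_nonneg: "(0::'a::po_comm_ring) \<le> of_nat n"
  by (induct n) (simp_all add: add_nonneg_nonneg po_zero_le_one)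

lemma mult_bounds_of_bounds:
  fixes r s N M :: "'a::{ordered_comm_ring, comm_ring_1}"
  assumes r: "- N \<le> r" "r \<le> N" and s: "- M \<le> s" "s \<le> M" and "0 \<le> N" "0 \<le> M"
  shows "- (3 * (N * M)) \<le> r * s" and "r * s \<le> 3 * (N * M)"
proof -
  \<comment> \<open>The bound N M itself would need halving, which a partial order does not allow.\<close>
  have "0 \<le> N - r" "0 \<le> N + r" "0 \<le> M - s" "0 \<le> M + s"
    using r s by (simp_all add: minus_le_iff add.commute[of N] flip: diff_minus_eq_add)
  then have "0 \<le> (N + r) * (M + s) + N * (M - s) + (N - r) * M"
    and "0 \<le> (N - r) * (M + s) + N * (M - s) + (N + r) * M"
    using \<open>0 \<le> N\<close> \<open>0 \<le> M\<close> by (simp_all add: add_nonneg_nonneg)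
  then have "0 \<le> r * s + 3 * (N * M)" and "r * s \<le> 3 * (N * M)"
    by (simp_all add: algebra_simps)
  then show "- (3 * (N * M)) \<le> r * s" and "r * s \<le> 3 * (N * M)"
    by (simp_all add: minus_le_iff add.commute flip: diff_minus_eq_add)
qed

instantiation rloc :: (po_comm_ring) comm_ring_1
begin

lift_definition uminus_rloc :: "'a rloc \<Rightarrow> 'a rloc" is "\<lambda>(r, s). (- r, s)"
  by (auto simp: frac_rel_def)

definition "plus_rloc = rl_add"
definition "times_rloc = rl_mult"
definition "zero_rloc = rl_of 0"
definition "one_rloc = rl_of 1"
definition "minus_rloc a b = rl_add a (- b)" for a b :: "'a rloc"

instance
proof
  fix a b c :: "'a rloc"
  show "a + b + c = a + (b + c)" "a + b = b + a" "a * b * c = a * (b * c)" "a * b = b * a"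
    "(a + b) * c = a * c + b * c"
    unfolding plus_rloc_def times_rloc_def
    by (transfer; clarsimp simp: frac_rel_def Loc_mult; simp add: algebra_simps)+
  show "0 + a = a" "- a + a = 0" "1 * a = a"
    unfolding plus_rloc_def times_rloc_def zero_rloc_def one_rloc_def
    by (transfer; clarsimp simp: frac_rel_def Loc_mult Loc_one; simp add: algebra_simps)+
  show "a - b = a + - b"
    unfolding plus_rloc_def minus_rloc_def ..
  show "(0::'a rloc) \<noteq> 1"
    unfolding zero_rloc_def one_rloc_def by transfer (simp add: frac_rel_def Loc_one)
qed

end

lemma rloc_cases:
  obtains r s where "x = abs_rloc (r, s)" "s \<in> Loc"
  by (induct x rule: rloc.abs_induct) (auto simp: frac_rel_def)

lemma frac_rel_refl_iff: "frac_rel (r, s) (r, s) \<longleftrightarrow> s \<in> Loc"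
  by (simp add: frac_rel_def)

lemma plus_abs_rloc:
  "s \<in> Loc \<Longrightarrow> s' \<in> Loc \<Longrightarrow> abs_rloc (r, s) + abs_rloc (r', s') = abs_rloc (r * s' + r' * s, s * s')"
  unfolding plus_rloc_def by (simp add: rl_add.abs_eq frac_rel_refl_iff)

lemma times_abs_rloc:
  "s \<in> Loc \<Longrightarrow> s' \<in> Loc \<Longrightarrow> abs_rloc (r, s) * abs_rloc (r', s') = abs_rloc (r * r', s * s')"
  unfolding times_rloc_def by (simp add: rl_mult.abs_eq frac_rel_refl_iff)

lemma uminus_abs_rloc: "s \<in> Loc \<Longrightarrow> - abs_rloc (r, s) = abs_rloc (- r, s)"
  by (simp add: uminus_rloc.abs_eq frac_rel_refl_iff)

lemma abs_rloc_in_Rbd_iff: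
  "s \<in> Loc \<Longrightarrow> abs_rloc (r, s) \<in> Rbd \<longleftrightarrow> (\<exists>n. - (of_nat n * s) \<le> r \<and> r \<le> of_nat n * s)"
  unfolding Rbd_def by (simp add: rl_of.abs_eq rl_le.abs_eq frac_rel_refl_iff Loc_one)

lemma Rbd_cases:
  assumes "a \<in> Rbd"
  obtains r s n where "a = abs_rloc (r, s)" "s \<in> Loc" "- (of_nat n * s) \<le> r" "r \<le> of_nat n * s"
  using assms abs_rloc_in_Rbd_iff by (metis rloc_cases)

lemma Rbd_add:
  assumes "a \<in> Rbd" "b \<in> Rbd"
  shows "a + b \<in> Rbd"
proof -
  obtain r s n where a: "a = abs_rloc (r, s)" "s \<in> Loc"
    and n: "- (of_nat n * s) \<le> r" "r \<le> of_nat n * s"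
    using assms(1) by (rule Rbd_cases)
  obtain r' s' m where b: "b = abs_rloc (r', s')" "s' \<in> Loc"
    and m: "- (of_nat m * s') \<le> r'" "r' \<le> of_nat m * s'"
    using assms(2) by (rule Rbd_cases)
  have s: "0 \<le> s" "0 \<le> s'"
    using a b Loc_nonneg by auto
  have "- (of_nat n * s) * s' + - (of_nat m * s') * s \<le> r * s' + r' * s"
    by (intro add_mono mult_right_mono n m s)
  moreover have "r * s' + r' * s \<le> of_nat n * s * s' + of_nat m * s' * s"
    by (intro add_mono mult_right_mono n m s)
  ultimately have "- (of_nat (n + m) * (s * s')) \<le> r * s' + r' * s
      \<and> r * s' + r' * s \<le> of_nat (n + m) * (s * s')"
    by (simp add: algebra_simps)
  then show ?thesis
    using a b by (simp only: plus_abs_rloc abs_rloc_in_Rbd_iff Loc_mult) blast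
qed

lemma Rbd_uminus:
  assumes "a \<in> Rbd"
  shows "- a \<in> Rbd"
proof -
  obtain r s n where a: "a = abs_rloc (r, s)" "s \<in> Loc"
    and n: "- (of_nat n * s) \<le> r" "r \<le> of_nat n * s"
    using assms by (rule Rbd_cases)
  then have "- (of_nat n * s) \<le> - r \<and> - r \<le> of_nat n * s"
    by (simp add: le_minus_iff minus_le_iff)
  then show ?thesis
    using a by (auto simp: uminus_abs_rloc abs_rloc_in_Rbd_iff)
qed

lemma Rbd_mult:
  assumes "a \<in> Rbd" "b \<in> Rbd"
  shows "a * b \<in> Rbd"
proof -
  obtain r s n where a: "a = abs_rloc (r, s)" "s \<in> Loc"
    and n: "- (of_nat n * s) \<le> r" "r \<le> of_nat n * s"
    using assms(1) by (rule Rbd_cases)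
  obtain r' s' m where b: "b = abs_rloc (r', s')" "s' \<in> Loc"
    and m: "- (of_nat m * s') \<le> r'" "r' \<le> of_nat m * s'"
    using assms(2) by (rule Rbd_cases)
  have "0 \<le> of_nat n * s" "0 \<le> of_nat m * s'"
    using a b by (simp_all add: Loc_nonneg po_of_nat_nonneg)
  then have "- (3 * (of_nat n * s * (of_nat m * s'))) \<le> r * r'"
    and "r * r' \<le> 3 * (of_nat n * s * (of_nat m * s'))"
    using mult_bounds_of_bounds[OF n m] by simp_all
  then have "- (of_nat (3 * n * m) * (s * s')) \<le> r * r' \<and> r * r' \<le> of_nat (3 * n * m) * (s * s')"
    by (simp add: algebra_simps)
  then show ?thesis
    using a b by (simp only: times_abs_rloc abs_rloc_in_Rbd_iff Loc_mult) blast
qed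

lemma Rbd_zero: "0 \<in> Rbd"
  unfolding zero_rloc_def rl_of.abs_eq by (auto simp: abs_rloc_in_Rbd_iff Loc_one po_of_nat_nonneg)

lemma Rbd_one: "1 \<in> Rbd"
proof -
  have "- 1 \<le> (1::'a::po_comm_ring)"
    using po_zero_le_one order_trans neg_le_0_iff_le by blast
  then show ?thesis
    unfolding one_rloc_def rl_of.abs_eq by (auto simp: abs_rloc_in_Rbd_iff Loc_one intro: exI[of _ 1])
qed

lemma Rbd_diff: "a \<in> Rbd \<Longrightarrow> b \<in> Rbd \<Longrightarrow> a - b \<in> Rbd"
  by (metis Rbd_add Rbd_uminus diff_conv_add_uminus)

lemma Rbd_of_nat: "of_nat n \<in> Rbd"
  by (induct n) (simp_all add: Rbd_add Rbd_zero Rbd_one)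

lemma Rbd_of_int: "of_int z \<in> Rbd"
  by (cases z rule: int_cases2) (simp_all add: Rbd_uminus Rbd_of_nat)

lemma Rbd_power: "a \<in> Rbd \<Longrightarrow> a ^ k \<in> Rbd"
  by (induct k) (simp_all add: Rbd_mult Rbd_one)

lemma Rbd_sum: "(\<And>x. x \<in> A \<Longrightarrow> f x \<in> Rbd) \<Longrightarrow> sum f A \<in> Rbd"
  by (induct A rule: infinite_finite_induct) (simp_all add: Rbd_add Rbd_zero)

context
  fixes \<psi> :: "'a::po_comm_ring rloc \<Rightarrow> real"
  assumes \<psi>: "\<psi> \<in> KR"
begin

lemma KR_add: "a \<in> Rbd \<Longrightarrow> b \<in> Rbd \<Longrightarrow> \<psi> (a + b) = \<psi> a + \<psi> b"
  using \<psi> unfolding KR_def plus_rloc_def by blast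

lemma KR_mult: "a \<in> Rbd \<Longrightarrow> b \<in> Rbd \<Longrightarrow> \<psi> (a * b) = \<psi> a * \<psi> b"
  using \<psi> unfolding KR_def times_rloc_def by blast

lemma KR_one: "\<psi> 1 = 1"
  using \<psi> unfolding KR_def one_rloc_def by blast

lemma KR_zero: "\<psi> 0 = 0"
  using KR_add[OF Rbd_zero Rbd_zero] by simp

lemma KR_uminus: "a \<in> Rbd \<Longrightarrow> \<psi> (- a) = - \<psi> a"
  using KR_add[OF _ Rbd_uminus, of a a] by (simp add: KR_zero)

lemma KR_diff: "a \<in> Rbd \<Longrightarrow> b \<in> Rbd \<Longrightarrow> \<psi> (a - b) = \<psi> a - \<psi> b"
  using KR_add[OF _ Rbd_uminus, of a b] by (simp add: KR_uminus)

lemma KR_of_nat: "\<psi> (of_nat n) = real n"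
  by (induct n) (simp_all add: KR_add Rbd_of_nat Rbd_one KR_one KR_zero)

lemma KR_of_int: "\<psi> (of_int z) = real_of_int z"
  by (cases z rule: int_cases2) (simp_all add: KR_uminus Rbd_of_nat KR_of_nat)

lemma KR_power: "a \<in> Rbd \<Longrightarrow> \<psi> (a ^ k) = \<psi> a ^ k"
  by (induct k) (simp_all add: KR_mult KR_one Rbd_power)

lemma KR_sum: "(\<And>x. x \<in> A \<Longrightarrow> f x \<in> Rbd) \<Longrightarrow> \<psi> (sum f A) = (\<Sum>x\<in>A. \<psi> (f x))"
  by (induct A rule: infinite_finite_induct) (simp_all add: KR_zero KR_add Rbd_sum)

lemma KR_sum_power2_diff_of_nat:
  assumes "\<And>x. x \<in> A \<Longrightarrow> f x \<in> Rbd"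
  shows "\<psi> ((\<Sum>x\<in>A. (f x)\<^sup>2) - of_nat m) = (\<Sum>x\<in>A. (\<psi> (f x))\<^sup>2) - real m"
  using assms by (simp add: KR_diff KR_sum KR_power KR_of_nat Rbd_sum Rbd_power Rbd_of_nat)

end

lemma abs_lt_of_sum_power2_lt:
  fixes f :: "'i \<Rightarrow> 'a::linordered_idom"
  assumes "finite A" "x \<in> A" "(\<Sum>y\<in>A. (f y)\<^sup>2) < c\<^sup>2" "0 \<le> c"
  shows "\<bar>f x\<bar> < c"
proof (rule power2_less_imp_less)
  have "(f x)\<^sup>2 \<le> (\<Sum>y\<in>A. (f y)\<^sup>2)"
    using assms(1,2) by (intro member_le_sum) simp_all
  with assms(3) show "\<bar>f x\<bar>\<^sup>2 < c\<^sup>2"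
    by simp
qed (fact assms(4))

definition KR_nbhd :: "('a::po_comm_ring rloc \<Rightarrow> real) \<Rightarrow> 'a rloc set \<Rightarrow> real \<Rightarrow> ('a rloc \<Rightarrow> real) set"
  where "KR_nbhd \<phi> A e = {\<psi> \<in> KR. \<forall>a\<in>A. \<bar>\<psi> a - \<phi> a\<bar> < e}"

lemma KR_nbhd_antimono: "A \<subseteq> A' \<Longrightarrow> e' \<le> e \<Longrightarrow> KR_nbhd \<phi> A' e' \<subseteq> KR_nbhd \<phi> A e"
  unfolding KR_nbhd_def by fastforce

lemma KR_nbhd_subset_openin:
  assumes "openin KR_topology W" "\<phi> \<in> W" "\<phi> \<in> KR"
  shows "\<exists>A e. finite A \<and> A \<subseteq> Rbd \<and> 0 < e \<and> KR_nbhd \<phi> A e \<subseteq> W"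
proof -
  have "generate_topology_on {{\<phi> \<in> KR. \<phi> a \<in> V} | a V. a \<in> Rbd \<and> open V} W"
    using assms(1) unfolding KR_topology_def by (rule openin_topology_generated_by)
  then show ?thesis
    using assms(2,3)
  proof (induction arbitrary: \<phi>)
    case Empty
    then show ?case by simp
  next
    case (Int W1 W2)
    then obtain A1 e1 A2 e2 where "finite A1" "A1 \<subseteq> Rbd" "0 < e1" "KR_nbhd \<phi> A1 e1 \<subseteq> W1"
      and "finite A2" "A2 \<subseteq> Rbd" "0 < e2" "KR_nbhd \<phi> A2 e2 \<subseteq> W2"
      by (meson IntD1 IntD2)
    moreover have "KR_nbhd \<phi> (A1 \<union> A2) (min e1 e2) \<subseteq> KR_nbhd \<phi> A1 e1 \<inter> KR_nbhd \<phi> A2 e2"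
      using KR_nbhd_antimono by (metis Int_greatest Un_upper1 Un_upper2 min.cobounded1 min.cobounded2)
    ultimately show ?case
      by (intro exI[of _ "A1 \<union> A2"] exI[of _ "min e1 e2"]) auto
  next
    case (UN K)
    then obtain W' where "W' \<in> K" "\<phi> \<in> W'"
      by blast
    then show ?case
      using UN.IH[of W' \<phi>] UN.prems(2) by blast
  next
    case (Basis S)
    then obtain a V where S: "S = {\<phi> \<in> KR. \<phi> a \<in> V}" "a \<in> Rbd" "open V"
      by blast
    with Basis.prems obtain e where "0 < e" "\<And>y. dist y (\<phi> a) < e \<Longrightarrow> y \<in> V"
      by (metis (no_types, lifting) mem_Collect_eq open_dist)
    then have "KR_nbhd \<phi> {a} e \<subseteq> S"
      unfolding KR_nbhd_def S(1) by (auto simp: dist_real_def)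
    then show ?case
      using \<open>0 < e\<close> S(2) by (intro exI[of _ "{a}"] exI[of _ e]) auto
  qed
qed

definition deviation_test :: "nat \<Rightarrow> ('a::po_comm_ring rloc \<Rightarrow> int) \<Rightarrow> 'a rloc set \<Rightarrow> 'a rloc"
  where "deviation_test n p A = (\<Sum>a\<in>A. (of_nat n * a - of_int (p a))\<^sup>2) - of_nat ((card A + 1)\<^sup>2)"

lemma deviation_test_in_Rbd: "A \<subseteq> Rbd \<Longrightarrow> deviation_test n p A \<in> Rbd"
  unfolding deviation_test_def
  by (blast intro: Rbd_diff Rbd_sum Rbd_power Rbd_mult Rbd_of_nat Rbd_of_int)

lemma KR_deviation_test:
  assumes \<psi>: "\<psi> \<in> KR" and A: "A \<subseteq> Rbd"
  shows "\<psi> (deviation_test n p A) = (\<Sum>a\<in>A. (real n * \<psi> a - p a)\<^sup>2) - (real (card A) + 1)\<^sup>2"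
proof -
  have Rbd: "of_nat n * a - of_int (p a) \<in> Rbd" if "a \<in> A" for a
    using that A by (blast intro: Rbd_diff Rbd_mult Rbd_of_nat Rbd_of_int)
  have "\<psi> (of_nat n * a - of_int (p a)) = real n * \<psi> a - p a" if "a \<in> A" for a
    using that A by (auto simp: KR_diff[OF \<psi>] KR_mult[OF \<psi>] KR_of_nat[OF \<psi>] KR_of_int[OF \<psi>]
        Rbd_mult Rbd_of_nat Rbd_of_int)
  moreover have "\<psi> (deviation_test n p A)
      = (\<Sum>a\<in>A. (\<psi> (of_nat n * a - of_int (p a)))\<^sup>2) - real ((card A + 1)\<^sup>2)"
    unfolding deviation_test_def by (rule KR_sum_power2_diff_of_nat[OF \<psi> Rbd])
  ultimately show ?thesis
    by simp
qed

lemma O_neg_subset_KR_nbhd: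
  assumes \<phi>: "\<phi> \<in> KR" and A: "finite A" "A \<subseteq> Rbd" and "0 < e"
  obtains b where "b \<in> Rbd" "\<phi> b < 0" "O_neg b \<subseteq> KR_nbhd \<phi> A e"
proof -
  define k where "k = card A"
  obtain n :: nat where n: "real k + 2 < real n * e"
    using ex_less_of_nat_mult[OF \<open>0 < e\<close>] by blast
  define p where "p a = round (real n * \<phi> a)" for a
  define b where "b = deviation_test n p A"
  have KR_b: "\<psi> b = (\<Sum>a\<in>A. (real n * \<psi> a - p a)\<^sup>2) - (real k + 1)\<^sup>2" if "\<psi> \<in> KR" for \<psi>
    unfolding b_def k_def using that A(2) by (rule KR_deviation_test)
  have p_close: "\<bar>real n * \<phi> a - p a\<bar> \<le> 1 / 2" for a
    unfolding p_def using of_int_round_abs_le[of "real n * \<phi> a"] by linarith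
  have "(real n * \<phi> a - p a)\<^sup>2 \<le> 1" for a
    using p_close[of a] by (simp add: abs_square_le_1)
  then have "(\<Sum>a\<in>A. (real n * \<phi> a - p a)\<^sup>2) \<le> real k * 1"
    unfolding k_def by (intro sum_bounded_above)
  moreover have "real k < (real k + 1)\<^sup>2"
    by (simp add: power2_sum add_nonneg_pos)
  ultimately have "\<phi> b < 0"
    using KR_b[OF \<phi>] by simp
  moreover have "\<bar>\<psi> a - \<phi> a\<bar> < e" if \<psi>: "\<psi> \<in> KR" "\<psi> b < 0" and "a \<in> A" for \<psi> a
  proof -
    have close: "\<bar>real n * \<psi> a - p a\<bar> < real k + 1"
      using A(1) \<open>a \<in> A\<close> KR_b[OF \<psi>(1)] \<psi>(2) by (intro abs_lt_of_sum_power2_lt) simp_all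
    have "real n * \<bar>\<psi> a - \<phi> a\<bar> = \<bar>real n * (\<psi> a - \<phi> a)\<bar>"
      by (simp add: abs_mult)
    also have "\<dots> = \<bar>(real n * \<psi> a - p a) - (real n * \<phi> a - p a)\<bar>"
      by (simp add: algebra_simps)
    also have "\<dots> < real k + 2"
      using close p_close[of a] by linarith
    also have "\<dots> < real n * e"
      by (fact n)
    finally show ?thesis
      by (simp add: mult_less_cancel_left)
  qed
  then have "O_neg b \<subseteq> KR_nbhd \<phi> A e"
    unfolding O_neg_def KR_nbhd_def by blast
  moreover have "b \<in> Rbd"
    unfolding b_def using A(2) by (rule deviation_test_in_Rbd)
  ultimately show ?thesis
    using that by blast
qed

theorem proposition21:
  fixes \<phi> :: "'a::po_comm_ring rloc \<Rightarrow> real" and U :: "('a rloc \<Rightarrow> real) set"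
  assumes N_Loc: "\<forall>n::nat. n \<ge> 1 \<longrightarrow> (of_nat n :: 'a) \<in> Loc"
    and phi: "\<phi> \<in> KR"
    and nbhd: "U \<subseteq> topspace KR_topology"
    and nbhd': "\<exists>W. openin KR_topology W \<and> \<phi> \<in> W \<and> W \<subseteq> U"
  shows "\<exists>b\<in>Rbd. \<phi> \<in> O_neg b \<and> O_neg b \<subseteq> U"
proof -
  obtain W where W: "openin KR_topology W" "\<phi> \<in> W" "W \<subseteq> U"
    using nbhd' by blast
  then obtain A e where A: "finite A" "A \<subseteq> Rbd" and "0 < e" and "KR_nbhd \<phi> A e \<subseteq> W"
    using KR_nbhd_subset_openin[OF W(1,2) phi] by blast
  then obtain b where "b \<in> Rbd" "\<phi> b < 0" "O_neg b \<subseteq> KR_nbhd \<phi> A e"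
    using O_neg_subset_KR_nbhd[OF phi A \<open>0 < e\<close>] by blast
  moreover have "\<phi> \<in> O_neg b"
    using phi \<open>\<phi> b < 0\<close> unfolding O_neg_def by blast
  ultimately show ?thesis
    using W(3) \<open>KR_nbhd \<phi> A e \<subseteq> W\<close> by blast
qed

end
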